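(* Let $q\in\mathbb C^\times$ with $|q|\ne1$, and let $A_q$ be the algebra with vector-space basis $\{z^nt^k:n\in\mathbb Z,k\in\mathbb N\}$ and multiplication $z^mt^k\cdot z^nt^l=q^{kn}z^{m+n}t^{k+l}$, endowed with the strongest locally convex topology. Write $u=\sum_{k}u_k t^k$ with $u_k=\sum_n u_{k,n}z^n$ Laurent polynomials, and for $C\ge1$ let $\|u_k\|_C=\sum_n|u_{k,n}|C^{|n|}$. (1) If $|q|<1$ and $D\ge1$, $K\in\mathbb N$ satisfy $D|q|^K\ge1$, then $p_{D,K}(u)=\sum_{k=0}^K\|u_k\|_{D|q|^k}$ is a submultiplicative seminorm on $A_q$; conversely every submultiplicative seminorm on $A_q$ is dominated by a constant multiple of some such $p_{D,K}$. (2) If $|q|>1$ and $D\ge1$, $K\in\mathbb N$ satisfy $D/|q|^K\ge1$, then $p_{D,K}(u)=\sum_{k=0}^K\|u_k\|_{D/|q|^k}$ is a submultiplicative seminorm on $A_q$; conversely every submultiplicative seminorm on $A_q$ is dominated by a constant multiple of some such $p_{D,K}$.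
   Context: $A_q$ is the algebra $\mathcal R_q(\mathbb C^\times\ltimes\mathbb C)$ (quantum `$az+b$'), i.e. skew polynomials $\sum_k u_k t^k$ with Laurent-polynomial coefficients $u_k$ in $z$, where $t\cdot z=q\,z\cdot t$; equivalently $(u\cdot v)_k=\sum_{i=0}^k u_i\cdot\varphi^i(v_{k-i})$ with $\varphi(z^n)=q^nz^n$. A seminorm $p$ is submultiplicative if $p(uv)\le p(u)p(v)$. *)

theory Defs
  imports Complex_Main
begin

text \<open>Elements of A_q: u k n is the coefficient of z^n t^k; finitely supported.\<close>
definition Aq :: "(nat \<Rightarrow> int \<Rightarrow> complex) set" where
  "Aq = {u. finite {(k, n). u k n \<noteq> 0}}"

definition aq_add :: "(nat \<Rightarrow> int \<Rightarrow> complex) \<Rightarrow> (nat \<Rightarrow> int \<Rightarrow> complex) \<Rightarrow> (nat \<Rightarrow> int \<Rightarrow> complex)" where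
  "aq_add u v = (\<lambda>k n. u k n + v k n)"

definition aq_scale :: "complex \<Rightarrow> (nat \<Rightarrow> int \<Rightarrow> complex) \<Rightarrow> (nat \<Rightarrow> int \<Rightarrow> complex)" where
  "aq_scale c u = (\<lambda>k n. c * u k n)"

text \<open>Product determined by z^a t^i * z^b t^j = q^(i b) z^(a+b) t^(i+j).\<close>
definition aq_mult :: "complex \<Rightarrow> (nat \<Rightarrow> int \<Rightarrow> complex) \<Rightarrow> (nat \<Rightarrow> int \<Rightarrow> complex) \<Rightarrow> (nat \<Rightarrow> int \<Rightarrow> complex)" where
  "aq_mult q u v = (\<lambda>k n. \<Sum>i\<le>k. \<Sum>a\<in>{a. u i a \<noteq> 0}.
       u i a * v (k - i) (n - a) * q powi (int i * (n - a)))"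

definition submult_seminorm :: "complex \<Rightarrow> ((nat \<Rightarrow> int \<Rightarrow> complex) \<Rightarrow> real) \<Rightarrow> bool" where
  "submult_seminorm q p \<longleftrightarrow>
     (\<forall>u\<in>Aq. \<forall>v\<in>Aq. p (aq_add u v) \<le> p u + p v) \<and>
     (\<forall>u\<in>Aq. \<forall>c. p (aq_scale c u) = norm c * p u) \<and>
     (\<forall>u\<in>Aq. \<forall>v\<in>Aq. p (aq_mult q u v) \<le> p u * p v)"

definition lnorm :: "real \<Rightarrow> (int \<Rightarrow> complex) \<Rightarrow> real" where
  "lnorm C f = (\<Sum>n\<in>{n. f n \<noteq> 0}. norm (f n) * C ^ nat \<bar>n\<bar>)"

definition pDK_lt :: "complex \<Rightarrow> real \<Rightarrow> nat \<Rightarrow> (nat \<Rightarrow> int \<Rightarrow> complex) \<Rightarrow> real" where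
  "pDK_lt q D K u = (\<Sum>k\<le>K. lnorm (D * norm q ^ k) (u k))"

definition pDK_gt :: "complex \<Rightarrow> real \<Rightarrow> nat \<Rightarrow> (nat \<Rightarrow> int \<Rightarrow> complex) \<Rightarrow> real" where
  "pDK_gt q D K u = (\<Sum>k\<le>K. lnorm (D / norm q ^ k) (u k))"

end

theory Submission imports Defs begin

text \<open>Both families p_{D,K} are weighted l^1-norms u \<mapsto> \<Sum> |u_{k,n}| w(k,n) on the monomial
basis z^n t^k, and such a norm is submultiplicative as soon as the weight satisfies
|q|^{ib} w(i+j, a+b) \<le> w(i,a) w(j,b), the shadow of z^a t^i \<cdot> z^b t^j = q^{ib} z^{a+b} t^{i+j}.
Conversely, a submultiplicative seminorm p is dominated by the weighted norm with weight
p(z^n t^k), and this weight satisfies the same inequality. For |q| < 1 that inequality alone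
forces p(t^k) = 0 for large k (because z t^k z^{-1} = q^{-k} t^k) and growth in n at rate at most
D|q|^k, which is domination by some p_{D,K}. Substituting n \<mapsto> -n turns the inequality for |q|
into the one for 1/|q|, reducing the case |q| > 1 to |q| < 1.\<close>

definition supp :: "(nat \<Rightarrow> int \<Rightarrow> complex) \<Rightarrow> (nat \<times> int) set" where
  "supp u = {(k, n). u k n \<noteq> 0}"

lemma Aq_iff_finite_supp: "u \<in> Aq \<longleftrightarrow> finite (supp u)"
  by (simp add: Aq_def supp_def)

definition add_exponents :: "(nat \<times> int) \<times> (nat \<times> int) \<Rightarrow> nat \<times> int" where
  "add_exponents = (\<lambda>((i, a), (j, b)). (i + j, a + b))"

lemma finite_row_supp: "u \<in> Aq \<Longrightarrow> finite {n. u k n \<noteq> 0}"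
proof -
  assume "u \<in> Aq"
  then have "finite (snd ` supp u)" by (simp add: Aq_iff_finite_supp)
  moreover have "{n. u k n \<noteq> 0} \<subseteq> snd ` supp u" by (force simp: supp_def)
  ultimately show ?thesis by (rule finite_subset[rotated])
qed

lemma sum_rows_eq_sum_supp:
  assumes "u \<in> Aq"
  shows "(\<Sum>k\<le>K. \<Sum>n\<in>{n. u k n \<noteq> 0}. f k n) = (\<Sum>(k, n)\<in>{x \<in> supp u. fst x \<le> K}. f k n)"
proof -
  have "Sigma {..K} (\<lambda>k. {n. u k n \<noteq> 0}) = {x \<in> supp u. fst x \<le> K}"
    by (auto simp: supp_def)
  then show ?thesis
    by (subst sum.Sigma) (auto intro: finite_row_supp[OF assms])
qed

lemma aq_mult_eq_fiber_sum:
  assumes u: "u \<in> Aq" and v: "v \<in> Aq"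
  shows "aq_mult q u v k n =
    (\<Sum>((i, a), (j, b))\<in>{p \<in> supp u \<times> supp v. add_exponents p = (k, n)}.
      u i a * v j b * q powi (int i * b))"
proof -
  define F where "F i a = u i a * v (k - i) (n - a) * q powi (int i * (n - a))" for i a
  have fu: "finite (supp u)" using u by (simp add: Aq_iff_finite_supp)
  have "aq_mult q u v k n = (\<Sum>(i, a)\<in>{x \<in> supp u. fst x \<le> k}. F i a)"
    unfolding aq_mult_def F_def by (rule sum_rows_eq_sum_supp[OF u])
  also have "\<dots> = (\<Sum>(i, a)\<in>{x \<in> supp u. fst x \<le> k \<and> (k - fst x, n - snd x) \<in> supp v}. F i a)"
    using fu by (intro sum.mono_neutral_right) (auto simp: F_def supp_def)
  also have "\<dots> = (\<Sum>((i, a), (j, b))\<in>{p \<in> supp u \<times> supp v. add_exponents p = (k, n)}.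
      u i a * v j b * q powi (int i * b))"
    by (rule sum.reindex_bij_witness[where i = fst and j = "\<lambda>(i, a). ((i, a), (k - i, n - a))"])
       (auto simp: add_exponents_def F_def)
  finally show ?thesis .
qed

lemma supp_aq_add: "supp (aq_add u v) \<subseteq> supp u \<union> supp v"
  by (auto simp: supp_def aq_add_def)

lemma supp_aq_scale: "supp (aq_scale c u) \<subseteq> supp u"
  by (auto simp: supp_def aq_scale_def)

lemma supp_aq_mult:
  assumes "u \<in> Aq" "v \<in> Aq"
  shows "supp (aq_mult q u v) \<subseteq> add_exponents ` (supp u \<times> supp v)"
proof
  fix z assume z: "z \<in> supp (aq_mult q u v)"
  obtain k n where kn: "z = (k, n)" by force
  show "z \<in> add_exponents ` (supp u \<times> supp v)"
  proof (rule ccontr)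
    assume "z \<notin> add_exponents ` (supp u \<times> supp v)"
    then have "{p \<in> supp u \<times> supp v. add_exponents p = (k, n)} = {}" using kn by force
    then have "aq_mult q u v k n = 0" by (simp only: aq_mult_eq_fiber_sum[OF assms] sum.empty)
    then show False using z kn by (simp add: supp_def)
  qed
qed

lemma Aq_add: "u \<in> Aq \<Longrightarrow> v \<in> Aq \<Longrightarrow> aq_add u v \<in> Aq"
  using supp_aq_add by (metis Aq_iff_finite_supp finite_UnI finite_subset)

lemma Aq_scale: "u \<in> Aq \<Longrightarrow> aq_scale c u \<in> Aq"
  using supp_aq_scale by (metis Aq_iff_finite_supp finite_subset)

lemma Aq_mult: "u \<in> Aq \<Longrightarrow> v \<in> Aq \<Longrightarrow> aq_mult q u v \<in> Aq"
  using supp_aq_mult by (metis Aq_iff_finite_supp finite_SigmaI finite_imageI finite_subset)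

definition wnorm :: "(nat \<Rightarrow> int \<Rightarrow> real) \<Rightarrow> (nat \<Rightarrow> int \<Rightarrow> complex) \<Rightarrow> real" where
  "wnorm w u = (\<Sum>(k, n)\<in>supp u. norm (u k n) * w k n)"

lemma wnorm_eq_sum_superset:
  assumes "finite S" "supp u \<subseteq> S"
  shows "wnorm w u = (\<Sum>(k, n)\<in>S. norm (u k n) * w k n)"
  unfolding wnorm_def by (rule sum.mono_neutral_left[OF assms]) (auto simp: supp_def)

lemma wnorm_add:
  assumes "u \<in> Aq" "v \<in> Aq" "\<And>k n. w k n \<ge> 0"
  shows "wnorm w (aq_add u v) \<le> wnorm w u + wnorm w v"
proof -
  let ?S = "supp u \<union> supp v"
  have fin: "finite ?S" using assms by (simp add: Aq_iff_finite_supp)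
  have "wnorm w (aq_add u v) = (\<Sum>(k, n)\<in>?S. norm (u k n + v k n) * w k n)"
    using wnorm_eq_sum_superset[OF fin supp_aq_add] by (simp add: aq_add_def)
  also have "\<dots> \<le> (\<Sum>(k, n)\<in>?S. norm (u k n) * w k n + norm (v k n) * w k n)"
    using assms(3) by (intro sum_mono) (auto simp flip: distrib_right intro: mult_right_mono norm_triangle_ineq)
  also have "\<dots> = wnorm w u + wnorm w v"
    by (simp add: case_prod_unfold sum.distrib wnorm_eq_sum_superset[OF fin])
  finally show ?thesis .
qed

lemma wnorm_scale:
  assumes "u \<in> Aq"
  shows "wnorm w (aq_scale c u) = norm c * wnorm w u"
proof -
  have "finite (supp u)" using assms by (simp add: Aq_iff_finite_supp)
  then have "wnorm w (aq_scale c u) = (\<Sum>(k, n)\<in>supp u. norm (c * u k n) * w k n)"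
    unfolding aq_scale_def by (rule wnorm_eq_sum_superset) (auto simp: supp_def)
  then show ?thesis
    by (simp add: wnorm_def sum_distrib_left case_prod_unfold norm_mult mult.assoc)
qed

definition twisted_submult :: "real \<Rightarrow> (nat \<Rightarrow> int \<Rightarrow> real) \<Rightarrow> bool" where
  "twisted_submult x P \<longleftrightarrow> (\<forall>i a j b. x powi (int i * b) * P (i + j) (a + b) \<le> P i a * P j b)"

lemma twisted_submultD:
  "twisted_submult x P \<Longrightarrow> x powi (int i * b) * P (i + j) (a + b) \<le> P i a * P j b"
  by (simp add: twisted_submult_def)

lemma wnorm_mult:
  assumes u: "u \<in> Aq" and v: "v \<in> Aq" and w_nonneg: "\<And>k n. w k n \<ge> 0"
    and w: "twisted_submult (norm q) w"
  shows "wnorm w (aq_mult q u v) \<le> wnorm w u * wnorm w v"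
proof -
  let ?P = "supp u \<times> supp v"
  define T where "T = (\<lambda>((i, a), (j, b)). u i a * v j b * q powi (int i * b))"
  have finP: "finite ?P" using u v by (simp add: Aq_iff_finite_supp)
  have "wnorm w (aq_mult q u v) =
      (\<Sum>(k, n)\<in>add_exponents ` ?P. norm (aq_mult q u v k n) * w k n)"
    using finP supp_aq_mult[OF u v] by (intro wnorm_eq_sum_superset) auto
  also have "\<dots> \<le> (\<Sum>z\<in>add_exponents ` ?P.
      \<Sum>p\<in>{p. p \<in> ?P \<and> add_exponents p = z}. norm (T p) * case_prod w (add_exponents p))"
  proof (intro sum_mono)
    fix z :: "nat \<times> int"
    obtain k n where z: "z = (k, n)" by force
    have "norm (aq_mult q u v k n) * w k n \<le> (\<Sum>p\<in>{p. p \<in> ?P \<and> add_exponents p = z}. norm (T p)) * w k n"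
      unfolding aq_mult_eq_fiber_sum[OF u v] z T_def
      by (intro mult_right_mono norm_sum w_nonneg)
    then show "(case z of (k, n) \<Rightarrow> norm (aq_mult q u v k n) * w k n) \<le>
        (\<Sum>p\<in>{p. p \<in> ?P \<and> add_exponents p = z}. norm (T p) * case_prod w (add_exponents p))"
      by (simp add: z sum_distrib_right)
  qed
  also have "\<dots> = (\<Sum>p\<in>?P. norm (T p) * case_prod w (add_exponents p))"
    using finP by (intro sum.group) auto
  also have "\<dots> \<le> (\<Sum>((i, a), (j, b))\<in>?P. (norm (u i a) * w i a) * (norm (v j b) * w j b))"
  proof (intro sum_mono, clarify)
    fix i a j b
    have "norm (T ((i, a), (j, b))) * w (i + j) (a + b) =
        norm (u i a) * norm (v j b) * (norm q powi (int i * b) * w (i + j) (a + b))"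
      by (simp add: T_def norm_mult norm_power_int)
    also have "\<dots> \<le> norm (u i a) * norm (v j b) * (w i a * w j b)"
      using twisted_submultD[OF w] by (intro mult_left_mono) auto
    finally show "norm (T ((i, a), (j, b))) * case_prod w (add_exponents ((i, a), (j, b)))
        \<le> (norm (u i a) * w i a) * (norm (v j b) * w j b)"
      by (simp add: add_exponents_def algebra_simps)
  qed
  also have "\<dots> = wnorm w u * wnorm w v"
    by (simp add: wnorm_def sum_product sum.cartesian_product case_prod_unfold)
  finally show ?thesis .
qed

lemma submult_seminorm_wnorm:
  assumes "\<And>k n. w k n \<ge> 0" "twisted_submult (norm q) w"
  shows "submult_seminorm q (wnorm w)"
  unfolding submult_seminorm_def
  using assms wnorm_add wnorm_scale wnorm_mult by blast

definition monomial :: "nat \<Rightarrow> int \<Rightarrow> nat \<Rightarrow> int \<Rightarrow> complex" where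
  "monomial k n = (\<lambda>i m. if i = k \<and> m = n then 1 else 0)"

lemma supp_monomial: "supp (monomial k n) = {(k, n)}"
  by (auto simp: supp_def monomial_def)

lemma Aq_monomial: "monomial k n \<in> Aq"
  by (simp add: Aq_iff_finite_supp supp_monomial)

lemma aq_mult_monomial:
  "aq_mult q (monomial i a) (monomial j b) = aq_scale (q powi (int i * b)) (monomial (i + j) (a + b))"
proof (intro ext)
  fix k n
  have fiber: "{p \<in> supp (monomial i a) \<times> supp (monomial j b). add_exponents p = (k, n)} =
      (if (i + j, a + b) = (k, n) then {((i, a), (j, b))} else {})"
    by (auto simp: supp_monomial add_exponents_def)
  show "aq_mult q (monomial i a) (monomial j b) k n = aq_scale (q powi (int i * b)) (monomial (i + j) (a + b)) k n"
    unfolding aq_mult_eq_fiber_sum[OF Aq_monomial Aq_monomial] fiber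
    by (auto simp: aq_scale_def monomial_def)
qed

lemma submult_seminorm_zero:
  assumes "submult_seminorm q p"
  shows "p (\<lambda>k n. 0) = 0"
proof -
  have "(\<lambda>k n. 0) \<in> Aq" by (simp add: Aq_def)
  moreover have "aq_scale 0 (\<lambda>k n. 0) = (\<lambda>k n. 0)" by (simp add: aq_scale_def)
  ultimately show ?thesis using assms unfolding submult_seminorm_def by (metis norm_zero mult_zero_left)
qed

lemma submult_seminorm_nonneg:
  assumes p: "submult_seminorm q p" and u: "u \<in> Aq"
  shows "p u \<ge> 0"
proof -
  have "aq_add u (aq_scale (-1) u) = (\<lambda>k n. 0)" by (simp add: aq_add_def aq_scale_def)
  then have "p (\<lambda>k n. 0) \<le> p u + p (aq_scale (-1) u)"
    using p u Aq_scale unfolding submult_seminorm_def by metis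
  moreover have "p (aq_scale (-1) u) = p u" using p u unfolding submult_seminorm_def by simp
  ultimately show ?thesis using submult_seminorm_zero[OF p] by simp
qed

lemma submult_seminorm_le_sum_monomials:
  assumes p: "submult_seminorm q p" and u: "u \<in> Aq"
  shows "p u \<le> (\<Sum>(k, n)\<in>supp u. norm (u k n) * p (monomial k n))"
proof -
  have "p u \<le> (\<Sum>(k, n)\<in>S. norm (u k n) * p (monomial k n))"
    if "finite S" "u \<in> Aq" "supp u \<subseteq> S" for S u
    using that
  proof (induction S arbitrary: u rule: finite_induct)
    case empty
    then have "u = (\<lambda>k n. 0)" by (auto simp: supp_def)
    then show ?case using submult_seminorm_zero[OF p] by simp
  next
    case (insert x S)
    obtain k n where x: "x = (k, n)" by force
    define u' where "u' = (\<lambda>i m. if (i, m) = x then 0 else u i m)"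
    have u': "u' \<in> Aq" "supp u' \<subseteq> S"
      using insert.prems by (auto simp: supp_def u'_def Aq_def elim!: rev_finite_subset)
    have "u = aq_add (aq_scale (u k n) (monomial k n)) u'"
      by (intro ext) (auto simp: aq_add_def aq_scale_def monomial_def u'_def x)
    then have "p u \<le> norm (u k n) * p (monomial k n) + p u'"
      using p u' Aq_scale[OF Aq_monomial] Aq_monomial unfolding submult_seminorm_def by metis
    also have "p u' \<le> (\<Sum>(i, m)\<in>S. norm (u' i m) * p (monomial i m))"
      using insert.IH u' by blast
    also have "\<dots> = (\<Sum>(i, m)\<in>S. norm (u i m) * p (monomial i m))"
      using insert.hyps by (intro sum.cong) (auto simp: u'_def)
    finally show ?case using insert.hyps by (simp add: x)
  qed
  then show ?thesis using u by (simp add: Aq_iff_finite_supp)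
qed

lemma submult_seminorm_le_wnorm:
  assumes p: "submult_seminorm q p" and u: "u \<in> Aq"
    and bound: "\<And>k n. p (monomial k n) \<le> C * w k n"
  shows "p u \<le> C * wnorm w u"
proof -
  have "p u \<le> (\<Sum>(k, n)\<in>supp u. norm (u k n) * p (monomial k n))"
    by (rule submult_seminorm_le_sum_monomials[OF p u])
  also have "\<dots> \<le> (\<Sum>(k, n)\<in>supp u. norm (u k n) * (C * w k n))"
    by (intro sum_mono) (auto intro: mult_left_mono bound)
  also have "\<dots> = C * wnorm w u"
    by (simp add: wnorm_def sum_distrib_left case_prod_unfold algebra_simps)
  finally show ?thesis .
qed

lemma twisted_submult_monomials:
  assumes p: "submult_seminorm q p"
  shows "twisted_submult (norm q) (\<lambda>k n. p (monomial k n))"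
  unfolding twisted_submult_def
proof (intro allI)
  fix i a j b
  have "p (aq_mult q (monomial i a) (monomial j b)) \<le> p (monomial i a) * p (monomial j b)"
    using p Aq_monomial unfolding submult_seminorm_def by blast
  moreover have "p (aq_mult q (monomial i a) (monomial j b)) = norm q powi (int i * b) * p (monomial (i + j) (a + b))"
    using p Aq_monomial unfolding aq_mult_monomial submult_seminorm_def by (simp add: norm_power_int)
  ultimately show "norm q powi (int i * b) * p (monomial (i + j) (a + b)) \<le> p (monomial i a) * p (monomial j b)"
    by simp
qed

lemma twisted_submult_reflect:
  assumes "twisted_submult x P"
  shows "twisted_submult (inverse x) (\<lambda>k n. P k (- n))"
  unfolding twisted_submult_def
proof (intro allI)
  fix i a j b
  have "x powi (int i * - b) * P (i + j) (- a + - b) \<le> P i (- a) * P j (- b)"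
    using twisted_submultD[OF assms] .
  moreover have "x powi (int i * - b) = inverse x powi (int i * b)"
    by (simp add: power_int_minus power_int_inverse)
  ultimately show "inverse x powi (int i * b) * P (i + j) (- (a + b)) \<le> P i (- a) * P j (- b)"
    by (simp add: add.commute)
qed

definition trunc_weight :: "real \<Rightarrow> real \<Rightarrow> nat \<Rightarrow> nat \<Rightarrow> int \<Rightarrow> real" where
  "trunc_weight x D K k n = (if k \<le> K then (D * x ^ k) ^ nat \<bar>n\<bar> else 0)"

lemma trunc_weight_nonneg: "0 \<le> x \<Longrightarrow> 0 \<le> D \<Longrightarrow> 0 \<le> trunc_weight x D K k n"
  by (simp add: trunc_weight_def)

lemma trunc_weight_uminus: "trunc_weight x D K k (- n) = trunc_weight x D K k n"
  by (simp add: trunc_weight_def)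

lemma twist_mult_power_le:
  fixes x D :: real
  assumes x: "0 < x" "x \<le> 1" and D: "0 \<le> D"
  shows "x powi (int i * b) * (D * x ^ (i + j)) ^ nat \<bar>b\<bar> \<le> (D * x ^ j) ^ nat \<bar>b\<bar>"
proof (cases "b \<ge> 0")
  case True
  then obtain m where b: "b = int m" by (metis nonneg_int_cases)
  have "x powi (int i * b) * (D * x ^ (i + j)) ^ nat \<bar>b\<bar> = (x ^ i * (D * x ^ (i + j))) ^ m"
    by (simp add: b power_mult power_mult_distrib flip: of_nat_mult)
  also have "\<dots> = (D * x ^ j * x ^ (2 * i)) ^ m"
    by (simp add: power_add power_mult power2_eq_square mult_ac)
  also have "\<dots> \<le> (D * x ^ j) ^ m"
    using x D by (intro power_mono mult_right_le_one_le) (auto simp: power_le_one)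
  finally show ?thesis by (simp add: b)
next
  case False
  then obtain m where b: "b = - int m" by (metis nonpos_int_cases linear)
  show ?thesis
    using x by (simp add: b power_int_minus power_add power_mult[symmetric]
        field_simps flip: of_nat_mult)
qed

lemma twisted_submult_trunc_weight:
  fixes x D :: real
  assumes x: "0 < x" "x \<le> 1" and D: "1 \<le> D" "1 \<le> D * x ^ K"
  shows "twisted_submult x (trunc_weight x D K)"
  unfolding twisted_submult_def
proof (intro allI)
  fix i a j b
  define C where "C k = D * x ^ k" for k
  show "x powi (int i * b) * trunc_weight x D K (i + j) (a + b) \<le> trunc_weight x D K i a * trunc_weight x D K j b"
  proof (cases "i + j \<le> K")
    case False
    then show ?thesis using x D by (simp add: trunc_weight_def)
  next
    case True
    have "D * x ^ K \<le> D * x ^ (i + j)" using True x D by (intro mult_left_mono power_decreasing) auto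
    then have C_ge: "1 \<le> C (i + j)" using D unfolding C_def by linarith
    have C_le: "C (i + j) \<le> C i" "C (i + j) \<le> C j"
      using x D by (auto simp: C_def intro!: mult_left_mono power_decreasing)
    have "x powi (int i * b) * C (i + j) ^ nat \<bar>a + b\<bar>
        \<le> x powi (int i * b) * (C (i + j) ^ nat \<bar>a\<bar> * C (i + j) ^ nat \<bar>b\<bar>)"
      using C_ge x unfolding power_add[symmetric] by (intro mult_left_mono power_increasing) auto
    also have "\<dots> = C (i + j) ^ nat \<bar>a\<bar> * (x powi (int i * b) * C (i + j) ^ nat \<bar>b\<bar>)"
      by simp
    also have "\<dots> \<le> C i ^ nat \<bar>a\<bar> * C j ^ nat \<bar>b\<bar>"
      using C_ge C_le x D twist_mult_power_le[OF x, of D i b j]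
      by (intro mult_mono power_mono) (auto simp: C_def)
    finally show ?thesis using True by (simp add: trunc_weight_def C_def)
  qed
qed

lemma twisted_submult_zero_row_power:
  assumes P: "twisted_submult x P" and P_nonneg: "\<And>k n. P k n \<ge> 0"
  shows "P 0 (int m * a) \<le> P 0 0 * P 0 a ^ m"
proof (induction m)
  case 0
  then show ?case by simp
next
  case (Suc m)
  have "P 0 (int (Suc m) * a) \<le> P 0 a * P 0 (int m * a)"
    using twisted_submultD[OF P, where i=0 and a=a and j=0 and b="int m * a"]
    by (simp add: algebra_simps)
  also have "\<dots> \<le> P 0 a * (P 0 0 * P 0 a ^ m)"
    using Suc P_nonneg by (intro mult_left_mono)
  finally show ?case by (simp add: algebra_simps)
qed

lemma twisted_submult_eventually_zero:
  fixes x :: real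
  assumes x: "0 < x" "x < 1" and P: "twisted_submult x P" and P_nonneg: "\<And>k n. P k n \<ge> 0"
  obtains K where "\<And>k n. K \<le> k \<Longrightarrow> P k n = 0"
proof -
  note twist = twisted_submultD[OF P]
  define AB where "AB = P 0 1 * P 0 (-1)"
  have AB_nonneg: "0 \<le> AB" using P_nonneg by (simp add: AB_def)
  \<comment> \<open>z t^k z^{-1} = q^{-k} t^k\<close>
  have loop: "P k 0 \<le> x ^ k * AB * P k 0" for k
  proof -
    have "inverse (x ^ k) * P k 0 \<le> P k 1 * P 0 (-1)"
      using twist[where i=k and a=1 and j=0 and b="-1"] by (simp add: power_int_minus)
    also have "\<dots> \<le> P 0 1 * P k 0 * P 0 (-1)"
      using twist[where i=0 and a=1 and j=k and b=0] P_nonneg by (intro mult_right_mono) auto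
    finally show ?thesis
      using x by (simp add: AB_def field_simps)
  qed
  obtain K where K: "x ^ K < inverse (AB + 1)"
    using real_arch_pow_inv[of "inverse (AB + 1)" x] x AB_nonneg by auto
  have "x ^ K * AB < 1"
  proof -
    have "x ^ K * AB \<le> x ^ K * (AB + 1)" using x by simp
    also have "\<dots> < 1" using K AB_nonneg by (simp add: field_simps)
    finally show ?thesis .
  qed
  then have PK: "P K 0 = 0"
    using loop[of K] P_nonneg[of K 0] by (smt (verit) mult_le_cancel_right1)
  show ?thesis
  proof (rule that)
    fix k n assume "K \<le> k"
    then have "P k 0 \<le> P (k - K) 0 * P K 0" using twist[where i="k - K" and a=0 and j=K and b=0] by simp
    then have "P k 0 = 0" using PK P_nonneg[of k 0] by simp
    then have "P k n \<le> 0" using twist[where i=0 and a=n and j=k and b=0] by simp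
    then show "P k n = 0" using P_nonneg[of k n] by simp
  qed
qed

lemma twisted_submult_row_bound:
  fixes x :: real
  assumes x: "0 < x" and P: "twisted_submult x P" and P_nonneg: "\<And>k n. P k n \<ge> 0"
    and R: "P 0 1 ^ 2 * P 0 (-1) \<le> R" "P 0 (-1) \<le> R"
  shows "P k n \<le> max 1 (P 0 0) ^ 2 * P k 0 * (R * x ^ k) ^ nat \<bar>n\<bar>"
proof -
  note twist = twisted_submultD[OF P]
  define E where "E = max 1 (P 0 0)"
  have E: "1 \<le> E" "P 0 0 \<le> E" by (auto simp: E_def)
  have E_le_sq: "E \<le> E ^ 2"
    using E(1) by (simp add: power2_eq_square)
  have iter: "P 0 (int m * a) \<le> E * P 0 a ^ m" for m a
    using twisted_submult_zero_row_power[OF P P_nonneg, of m a] E P_nonneg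
    by (meson order_trans mult_right_mono zero_le_power)
  have x_pow: "x powi (- (int k * int m)) = inverse (x ^ (k * m))" for m
    by (simp add: power_int_minus flip: of_nat_mult)
  consider m where "n = int m" | m where "n = - int m" by (metis int_cases2)
  then show ?thesis
  proof cases
    case (1 m)
    \<comment> \<open>(z^{2m} t^k) z^{-m} = q^{-km} z^m t^k\<close>
    have "inverse (x ^ (k * m)) * P k (int m) \<le> P k (2 * int m) * P 0 (- int m)"
      using twist[where i=k and a="2 * int m" and j=0 and b="- int m"] by (simp add: x_pow)
    also have "\<dots> \<le> (P 0 (2 * int m) * P k 0) * P 0 (- int m)"
      using twist[where i=0 and a="2 * int m" and j=k and b=0] P_nonneg by (intro mult_right_mono) auto
    also have "\<dots> \<le> (E * P 0 1 ^ (2 * m) * P k 0) * (E * P 0 (-1) ^ m)"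
      using iter[of "2 * m" 1] iter[of m "-1"] P_nonneg E
      by (intro mult_mono mult_right_mono) auto
    also have "\<dots> = E ^ 2 * P k 0 * (P 0 1 ^ 2 * P 0 (-1)) ^ m"
      by (simp add: power_mult power_mult_distrib power2_eq_square)
    also have "\<dots> \<le> E ^ 2 * P k 0 * R ^ m"
      using R P_nonneg E by (intro mult_left_mono power_mono) auto
    finally show ?thesis
      using x by (simp add: 1 E_def field_simps power_mult)
  next
    case (2 m)
    have "inverse (x ^ (k * m)) * P k (- int m) \<le> P k 0 * P 0 (- int m)"
      using twist[where i=k and a=0 and j=0 and b="- int m"] by (simp add: x_pow)
    also have "\<dots> \<le> P k 0 * (E * P 0 (-1) ^ m)"
      using iter[of m "-1"] P_nonneg by (intro mult_left_mono) auto
    also have "\<dots> \<le> P k 0 * (E ^ 2 * R ^ m)"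
      using P_nonneg E R(2) E_le_sq by (intro mult_left_mono mult_mono power_mono) auto
    finally show ?thesis
      using x by (simp add: 2 E_def field_simps power_mult)
  qed
qed

lemma twisted_submult_le_trunc_weight:
  fixes x :: real
  assumes x: "0 < x" "x < 1" and P: "twisted_submult x P" and P_nonneg: "\<And>k n. P k n \<ge> 0"
  obtains D K C where "1 \<le> D" "1 \<le> D * x ^ K" "\<And>k n. P k n \<le> C * trunc_weight x D K k n"
proof -
  obtain K where K: "\<And>k n. K \<le> k \<Longrightarrow> P k n = 0"
    using twisted_submult_eventually_zero[OF x P P_nonneg] by blast
  define D where "D = max (max 1 (P 0 1 ^ 2 * P 0 (-1))) (max (P 0 (-1)) (inverse (x ^ K)))"
  define C where "C = max 1 (P 0 0) ^ 2 * Max ((\<lambda>k. P k 0) ` {..K})"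
  have D: "1 \<le> D" "P 0 1 ^ 2 * P 0 (-1) \<le> D" "P 0 (-1) \<le> D" "inverse (x ^ K) \<le> D"
    by (auto simp: D_def)
  have "1 \<le> D * x ^ K"
    using mult_right_mono[OF D(4), of "x ^ K"] x by simp
  moreover have "P k n \<le> C * trunc_weight x D K k n" for k n
  proof (cases "k \<le> K")
    case True
    have "P k n \<le> max 1 (P 0 0) ^ 2 * P k 0 * (D * x ^ k) ^ nat \<bar>n\<bar>"
      using twisted_submult_row_bound[OF x(1) P P_nonneg D(2,3)] .
    also have "\<dots> \<le> C * (D * x ^ k) ^ nat \<bar>n\<bar>"
      using True D x unfolding C_def by (intro mult_right_mono mult_left_mono Max_ge) auto
    finally show ?thesis using True by (simp add: trunc_weight_def)
  next
    case False
    then show ?thesis using K[of k n] by (simp add: trunc_weight_def)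
  qed
  ultimately show ?thesis using D(1) that by blast
qed

lemma sum_lnorm_eq_wnorm:
  assumes u: "u \<in> Aq"
  shows "(\<Sum>k\<le>K. lnorm (g k) (u k)) = wnorm (\<lambda>k n. if k \<le> K then g k ^ nat \<bar>n\<bar> else 0) u"
proof -
  have "finite (supp u)" using u by (simp add: Aq_iff_finite_supp)
  then have "wnorm (\<lambda>k n. if k \<le> K then g k ^ nat \<bar>n\<bar> else 0) u
      = (\<Sum>(k, n)\<in>{x \<in> supp u. fst x \<le> K}. norm (u k n) * g k ^ nat \<bar>n\<bar>)"
    unfolding wnorm_def by (intro sum.mono_neutral_cong_right) (auto split: if_splits)
  then show ?thesis
    by (simp add: lnorm_def sum_rows_eq_sum_supp[OF u])
qed

lemma pDK_lt_eq_wnorm: "u \<in> Aq \<Longrightarrow> pDK_lt q D K u = wnorm (trunc_weight (norm q) D K) u"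
  unfolding pDK_lt_def trunc_weight_def by (rule sum_lnorm_eq_wnorm)

lemma pDK_gt_eq_wnorm:
  assumes "u \<in> Aq"
  shows "pDK_gt q D K u = wnorm (trunc_weight (inverse (norm q)) D K) u"
proof -
  have "D / norm q ^ k = D * inverse (norm q) ^ k" for k
    by (simp add: power_inverse divide_inverse)
  then show ?thesis
    unfolding pDK_gt_def trunc_weight_def by (simp only: sum_lnorm_eq_wnorm[OF assms])
qed

lemma submult_seminorm_cong:
  assumes "\<And>u. u \<in> Aq \<Longrightarrow> p u = p' u"
  shows "submult_seminorm q p \<longleftrightarrow> submult_seminorm q p'"
  unfolding submult_seminorm_def using assms Aq_add Aq_scale Aq_mult by simp

lemma submult_seminorm_pDK_lt:
  assumes "q \<noteq> 0" "norm q \<le> 1" "1 \<le> D" "1 \<le> D * norm q ^ K"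
  shows "submult_seminorm q (pDK_lt q D K)"
proof -
  have "submult_seminorm q (wnorm (trunc_weight (norm q) D K))"
    using assms by (intro submult_seminorm_wnorm twisted_submult_trunc_weight trunc_weight_nonneg) auto
  then show ?thesis by (metis submult_seminorm_cong pDK_lt_eq_wnorm)
qed

lemma submult_seminorm_pDK_gt:
  assumes "1 \<le> norm q" "1 \<le> D" "1 \<le> D / norm q ^ K"
  shows "submult_seminorm q (pDK_gt q D K)"
proof -
  let ?w = "trunc_weight (inverse (norm q)) D K"
  have "twisted_submult (inverse (norm q)) ?w"
    using assms by (intro twisted_submult_trunc_weight) (auto simp: power_inverse divide_inverse inverse_le_1_iff)
  then have "twisted_submult (norm q) ?w"
    using twisted_submult_reflect by (fastforce simp: trunc_weight_uminus)
  then have "submult_seminorm q (wnorm ?w)"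
    using assms by (intro submult_seminorm_wnorm trunc_weight_nonneg) auto
  then show ?thesis by (metis submult_seminorm_cong pDK_gt_eq_wnorm)
qed

lemma pDK_lt_dominates:
  assumes q: "q \<noteq> 0" "norm q < 1" and p: "submult_seminorm q p"
  shows "\<exists>D K C. 1 \<le> D \<and> 1 \<le> D * norm q ^ K \<and> (\<forall>u\<in>Aq. p u \<le> C * pDK_lt q D K u)"
proof -
  obtain D K C where D: "1 \<le> D" "1 \<le> D * norm q ^ K"
      and bound: "\<And>k n. p (monomial k n) \<le> C * trunc_weight (norm q) D K k n"
    using twisted_submult_le_trunc_weight[OF _ q(2) twisted_submult_monomials[OF p]]
      submult_seminorm_nonneg[OF p Aq_monomial] q(1) by auto
  have "\<forall>u\<in>Aq. p u \<le> C * pDK_lt q D K u"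
    using submult_seminorm_le_wnorm[OF p _ bound] by (simp add: pDK_lt_eq_wnorm)
  with D show ?thesis by blast
qed

lemma pDK_gt_dominates:
  assumes q: "norm q > 1" and p: "submult_seminorm q p"
  shows "\<exists>D K C. 1 \<le> D \<and> 1 \<le> D / norm q ^ K \<and> (\<forall>u\<in>Aq. p u \<le> C * pDK_gt q D K u)"
proof -
  have x: "0 < inverse (norm q)" "inverse (norm q) < 1" using q by (auto simp: inverse_less_1_iff)
  obtain D K C where D: "1 \<le> D" "1 \<le> D * inverse (norm q) ^ K"
      and bound: "\<And>k n. p (monomial k (- n)) \<le> C * trunc_weight (inverse (norm q)) D K k n"
    using twisted_submult_le_trunc_weight[OF x twisted_submult_reflect[OF twisted_submult_monomials[OF p]]]
      submult_seminorm_nonneg[OF p Aq_monomial] by blast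
  have "p (monomial k n) \<le> C * trunc_weight (inverse (norm q)) D K k n" for k n
    using bound[of k "- n"] by (simp add: trunc_weight_uminus)
  then have "\<forall>u\<in>Aq. p u \<le> C * pDK_gt q D K u"
    using submult_seminorm_le_wnorm[OF p] by (simp add: pDK_gt_eq_wnorm)
  moreover have "1 \<le> D / norm q ^ K" using D(2) by (simp add: power_inverse divide_inverse)
  ultimately show ?thesis using D(1) by blast
qed

theorem mainTheorem16:
  fixes q :: complex
  assumes "q \<noteq> 0" and "norm q \<noteq> 1"
  shows "(norm q < 1 \<longrightarrow>
            (\<forall>D K. D \<ge> 1 \<and> D * norm q ^ K \<ge> 1 \<longrightarrow> submult_seminorm q (pDK_lt q D K)) \<and>
            (\<forall>p. submult_seminorm q p \<longrightarrow>
               (\<exists>D K C. D \<ge> 1 \<and> D * norm q ^ K \<ge> 1 \<and> (\<forall>u\<in>Aq. p u \<le> C * pDK_lt q D K u))))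
       \<and> (norm q > 1 \<longrightarrow>
            (\<forall>D K. D \<ge> 1 \<and> D / norm q ^ K \<ge> 1 \<longrightarrow> submult_seminorm q (pDK_gt q D K)) \<and>
            (\<forall>p. submult_seminorm q p \<longrightarrow>
               (\<exists>D K C. D \<ge> 1 \<and> D / norm q ^ K \<ge> 1 \<and> (\<forall>u\<in>Aq. p u \<le> C * pDK_gt q D K u))))"
  using submult_seminorm_pDK_lt[OF assms(1)] pDK_lt_dominates[OF assms(1)]
    submult_seminorm_pDK_gt pDK_gt_dominates
  by (meson less_imp_le)

end
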